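(* Let $G$ be a matrix with entries from a field $\mathbb{F}$, with row index set $S$ and column index set $T$. Suppose $S=S_1\cup\cdots\cup S_m$ and $T=T_1\cup\cdots\cup T_n$ are partitions into pairwise disjoint sets. Let $s_1,\dots,s_m,t_1,\dots,t_n$ be non-negative integers with $t_j\le |T_j|$ for all $j$. Then there exist subsets $\mathbf{s}_i\subseteq S_i$ with $|\mathbf{s}_i|=s_i$ ($1\le i\le m$) and $\mathbf{t}_j\subseteq T_j$ with $|\mathbf{t}_j|=t_j$ ($1\le j\le n$) such that \[ \operatorname{rank}\Big(G\big(\textstyle\bigcup_{i=1}^m\mathbf{s}_i,\bigcup_{j=1}^n\mathbf{t}_j\big)\Big)=\sum_{i=1}^m s_i, \] if and only if for every $I\subseteq\{1,\dots,m\}$ and every $K\subseteq\{1,\dots,n\}$, \[ \operatorname{rank}\Big(G\big(\textstyle\bigcup_{i\in I}S_i,\bigcup_{k\in K}T_k\big)\Big)\ \ge\ \sum_{i\in I}s_i+\sum_{k\in K}t_k-\sum_{j=1}^n t_j . \]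
   Context: For $\mathbf{s}\subseteq S$ and $\mathbf{t}\subseteq T$, $G(\mathbf{s},\mathbf{t})$ denotes the submatrix of $G$ formed by the rows with indices in $\mathbf{s}$ and the columns with indices in $\mathbf{t}$ (the rank of a submatrix with no rows or no columns is $0$). *)

theory Defs
  imports Complex_Main "HOL-Library.Function_Algebras"
begin

text \<open>A matrix with row index set S and column index set T over a field is
a function G :: 'r \<Rightarrow> 'c \<Rightarrow> 'a.\<close>

definition scale_fun :: "'a::field \<Rightarrow> ('c \<Rightarrow> 'a) \<Rightarrow> ('c \<Rightarrow> 'a)" where
  "scale_fun c f = (\<lambda>j. c * f j)"

lemma vector_space_scale_fun: "vector_space (scale_fun :: 'a::field \<Rightarrow> ('c \<Rightarrow> 'a) \<Rightarrow> _)"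
  by unfold_locales (auto simp: scale_fun_def algebra_simps)

text \<open>Rank of the submatrix G(s,t): dimension of its row space (rows of the
submatrix are the rows i \<in> s restricted to the columns t, extended by zero).
With no rows or no columns this is 0.\<close>

definition submatrix_rank :: "('r \<Rightarrow> 'c \<Rightarrow> 'a::field) \<Rightarrow> 'r set \<Rightarrow> 'c set \<Rightarrow> nat" where
  "submatrix_rank G s t =
     vector_space.dim scale_fun ((\<lambda>i. \<lambda>j. if j \<in> t then G i j else 0) ` s)"

end

theory Submission
  imports Defs
begin

(* The theorem is a Rado-type statement, and the proof reduces it to Rado's theorem
   for submodular rank functions.

   Adjoin to the rows of G (restricted to the columns T) the unit vectors e_j, j \<in> T.
   For rows R and a set C' \<subseteq> T of "deleted" columns, the rows in R together with the
   e_j, j \<in> C', span a space of dimension rank G(R, T - C') + |C'|.  Choosing s_i rows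
   in S_i and keeping t_j columns of T_j (i.e. deleting |T_j| - t_j of them) so that the
   submatrix has full row rank is therefore the same as choosing an independent set of
   this augmented vector configuration meeting each block S_i resp. T_j in a prescribed
   number of elements.  Rado's theorem characterises the existence of such a set by a
   Hall-type inequality for every union of blocks; unfolding that inequality gives the
   rank condition of the theorem. *)

context vector_space
begin

text \<open>Dimension is monotone (the finite-dimensional library version does not apply).\<close>
lemma dim_subset_finite:
  assumes "S \<subseteq> T" "finite T"
  shows "dim S \<le> dim T"
proof -
  obtain B where B: "B \<subseteq> T" "independent B" "T \<subseteq> span B" "card B = dim T"
    by (rule basis_exists)
  have "finite B" using B(1) assms(2) finite_subset by blast
  then have "dim S \<le> card B" using assms(1) B(3) by (intro dim_le_card) auto
  then show ?thesis using B(4) by simp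
qed

text \<open>Dimension is submodular: extend a basis of \<open>A \<inter> B\<close> to bases of \<open>A\<close> and of \<open>B\<close>.\<close>
lemma dim_Un_Int_le:
  assumes "finite A" "finite B"
  shows "dim (A \<union> B) + dim (A \<inter> B) \<le> dim A + dim B"
proof -
  obtain B0 where B0: "B0 \<subseteq> A \<inter> B" "independent B0" "A \<inter> B \<subseteq> span B0" "card B0 = dim (A \<inter> B)"
    by (rule basis_exists)
  obtain BA where BA: "B0 \<subseteq> BA" "BA \<subseteq> A" "independent BA" "A \<subseteq> span BA"
    using maximal_independent_subset_extend[of B0 A] B0 by auto
  obtain BB where BB: "B0 \<subseteq> BB" "BB \<subseteq> B" "independent BB" "B \<subseteq> span BB"
    using maximal_independent_subset_extend[of B0 B] B0 by auto
  have fin: "finite BA" "finite BB" using BA(2) BB(2) assms finite_subset by blast+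
  have "A \<union> B \<subseteq> span (BA \<union> BB)"
    using BA(4) BB(4) span_mono[of BA "BA \<union> BB"] span_mono[of BB "BA \<union> BB"] by blast
  then have "dim (A \<union> B) \<le> card (BA \<union> BB)" using fin by (intro dim_le_card) auto
  moreover have "card (BA \<union> BB) + card (BA \<inter> BB) = card BA + card BB"
    using card_Un_Int[OF fin] by simp
  moreover have "card B0 \<le> card (BA \<inter> BB)"
    using BA(1) BB(1) fin by (intro card_mono) auto
  moreover have "card BA = dim A" "card BB = dim B"
    using BA BB basis_card_eq_dim by blast+
  ultimately show ?thesis using B0(4) by linarith
qed

lemma span_Un_perturb:
  assumes "\<And>i. i \<in> R \<Longrightarrow> f i - g i \<in> span W"
  shows "span (f ` R \<union> W) = span (g ` R \<union> W)"
proof -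
  have sub: "span (f ` R \<union> W) \<subseteq> span (g ` R \<union> W)"
    if diff: "\<And>i. i \<in> R \<Longrightarrow> f i - g i \<in> span W" for f g :: "_ \<Rightarrow> 'b"
  proof (rule span_minimal)
    show "f ` R \<union> W \<subseteq> span (g ` R \<union> W)"
    proof
      fix x assume "x \<in> f ` R \<union> W"
      then consider i where "i \<in> R" "x = f i" | "x \<in> W" by blast
      then show "x \<in> span (g ` R \<union> W)"
      proof cases
        case 1
        have "g i \<in> span (g ` R \<union> W)" using 1 by (intro span_base) blast
        moreover have "f i - g i \<in> span (g ` R \<union> W)"
          using diff[OF 1(1)] span_mono[of W "g ` R \<union> W"] by blast
        ultimately show ?thesis using 1 span_add by fastforce
      qed (auto intro: span_base)
    qed
  qed (rule subspace_span)
  have "g i - f i \<in> span W" if "i \<in> R" for i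
    using span_neg[OF assms[OF that]] by simp
  then show ?thesis using sub[of f g, OF assms] sub[of g f] by blast
qed

end

interpretation vs: vector_space "scale_fun :: 'a::field \<Rightarrow> ('c \<Rightarrow> 'a) \<Rightarrow> ('c \<Rightarrow> 'a)"
  by (rule vector_space_scale_fun)

text \<open>A rank function: bounded by cardinality, monotone and submodular on finite sets.
  A finite set \<open>X\<close> is independent if \<open>r X = card X\<close>.\<close>
locale rank_function =
  fixes r :: "'e set \<Rightarrow> nat"
  assumes rank_le_card: "finite X \<Longrightarrow> r X \<le> card X"
    and rank_mono: "X \<subseteq> Y \<Longrightarrow> finite Y \<Longrightarrow> r X \<le> r Y"
    and rank_submodular: "finite X \<Longrightarrow> finite Y \<Longrightarrow> r (X \<union> Y) + r (X \<inter> Y) \<le> r X + r Y"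
begin

lemma independent_subset:
  assumes "finite X" "r X = card X" "Y \<subseteq> X"
  shows "r Y = card Y"
proof -
  have fin: "finite Y" "finite (X - Y)" using assms finite_subset by blast+
  have "Y \<union> (X - Y) = X" "Y \<inter> (X - Y) = {}" using assms(3) by blast+
  then have "r X \<le> r Y + r (X - Y)" "card X = card Y + card (X - Y)"
    using rank_submodular[OF fin] card_Un_disjoint[OF fin] by auto
  moreover have "r (X - Y) \<le> card (X - Y)" "r Y \<le> card Y" using rank_le_card fin by auto
  ultimately show ?thesis using assms(2) by linarith
qed

text \<open>Key step of Rado's theorem: if the Hall condition holds, then removing either of
  two distinct elements from the same set \<open>A j0\<close> cannot both violate it, by
  submodularity applied to the two violating index sets.\<close>
lemma rado_exchange:
  assumes fJ0: "finite J0" and fin: "\<forall>j\<in>J0. finite (A j)"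
    and hall: "\<forall>J\<subseteq>J0. card J \<le> r (\<Union>(A ` J))"
    and j0: "j0 \<in> J0" and x: "x1 \<noteq> x2"
    and J1: "J1 \<subseteq> J0" "r (\<Union>((A(j0 := A j0 - {x1})) ` J1)) < card J1"
    and J2: "J2 \<subseteq> J0" "r (\<Union>((A(j0 := A j0 - {x2})) ` J2)) < card J2"
  shows False
proof -
  define Y1 where "Y1 = \<Union>((A(j0 := A j0 - {x1})) ` J1)"
  define Y2 where "Y2 = \<Union>((A(j0 := A j0 - {x2})) ` J2)"
  have "j0 \<in> J1"
  proof (rule ccontr)
    assume "j0 \<notin> J1"
    then have "Y1 = \<Union>(A ` J1)" by (auto simp: Y1_def)
    then show False using J1 hall unfolding Y1_def[symmetric] by (metis leD)
  qed
  moreover have "j0 \<in> J2"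
  proof (rule ccontr)
    assume "j0 \<notin> J2"
    then have "Y2 = \<Union>(A ` J2)" by (auto simp: Y2_def)
    then show False using J2 hall unfolding Y2_def[symmetric] by (metis leD)
  qed
  ultimately have j0_both: "j0 \<in> J1 \<inter> J2" by blast
  have fJ: "finite J1" "finite J2" using J1 J2 fJ0 finite_subset by blast+
  have fY: "finite Y1" "finite Y2" unfolding Y1_def Y2_def using fJ J1(1) J2(1) fin by auto
  have "\<Union>(A ` (J1 \<union> J2)) \<subseteq> Y1 \<union> Y2"
    using j0_both x by (auto simp: Y1_def Y2_def split: if_splits)
  then have "card (J1 \<union> J2) \<le> r (Y1 \<union> Y2)"
    using hall J1(1) J2(1) rank_mono[of _ "Y1 \<union> Y2"] fY by (meson le_sup_iff order.trans finite_UnI)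
  moreover have "\<Union>(A ` (J1 \<inter> J2 - {j0})) \<subseteq> Y1 \<inter> Y2" by (auto simp: Y1_def Y2_def)
  then have "card (J1 \<inter> J2 - {j0}) \<le> r (Y1 \<inter> Y2)"
    using hall J1(1) rank_mono[of _ "Y1 \<inter> Y2"] fY by (meson Diff_subset le_infI1 order.trans finite_Int)
  moreover have "card (J1 \<inter> J2 - {j0}) + 1 = card (J1 \<inter> J2)"
    using card_Suc_Diff1[of "J1 \<inter> J2" j0] j0_both fJ by simp
  moreover have "card (J1 \<union> J2) + card (J1 \<inter> J2) = card J1 + card J2"
    using card_Un_Int[OF fJ] by simp
  moreover have "r (Y1 \<union> Y2) + r (Y1 \<inter> Y2) \<le> r Y1 + r Y2" using rank_submodular fY by simp
  ultimately show False using J1(2) J2(2) unfolding Y1_def[symmetric] Y2_def[symmetric] by linarith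
qed

lemma rado_shrink:
  assumes "finite J0" "\<forall>j\<in>J0. finite (A j)" "\<forall>J\<subseteq>J0. card J \<le> r (\<Union>(A ` J))"
    and "j0 \<in> J0" "2 \<le> card (A j0)"
  shows "\<exists>x\<in>A j0. \<forall>J\<subseteq>J0. card J \<le> r (\<Union>((A(j0 := A j0 - {x})) ` J))"
proof (rule ccontr)
  assume none: "\<not> ?thesis"
  obtain x1 where x1: "x1 \<in> A j0" using assms(5) by fastforce
  moreover have "card (A j0 - {x1}) \<ge> 1" using assms(2,4,5) x1 by simp
  then have "A j0 - {x1} \<noteq> {}" by (metis card.empty not_one_le_zero)
  then obtain x2 where "x2 \<in> A j0" "x1 \<noteq> x2" by blast
  moreover from none have
    "\<forall>x\<in>A j0. \<exists>J\<subseteq>J0. r (\<Union>((A(j0 := A j0 - {x})) ` J)) < card J" by (auto simp: not_le)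
  ultimately obtain J1 J2 where
    "J1 \<subseteq> J0" "r (\<Union>((A(j0 := A j0 - {x1})) ` J1)) < card J1"
    "J2 \<subseteq> J0" "r (\<Union>((A(j0 := A j0 - {x2})) ` J2)) < card J2"
    by meson
  then show False using rado_exchange[OF assms(1-4) \<open>x1 \<noteq> x2\<close>] by blast
qed

lemma rado_singletons:
  assumes "finite J0" "\<forall>j\<in>J0. finite (A j)" "\<forall>J\<subseteq>J0. card J \<le> r (\<Union>(A ` J))"
    and "\<forall>j\<in>J0. card (A j) \<le> 1"
  shows "\<exists>f. (\<forall>j\<in>J0. f j \<in> A j) \<and> inj_on f J0 \<and> r (f ` J0) = card J0"
proof -
  define f where "f j = (SOME x. x \<in> A j)" for j
  have single: "A j = {f j}" if "j \<in> J0" for j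
  proof -
    have "1 \<le> r (A j)" using assms(3)[rule_format, of "{j}"] that by simp
    also have "\<dots> \<le> card (A j)" using rank_le_card assms(2) that by simp
    finally have "card (A j) = 1" using assms(4) that by force
    then obtain a where "A j = {a}" by (rule card_1_singletonE)
    then show ?thesis by (simp add: f_def)
  qed
  then have "\<Union>(A ` J0) = f ` J0" by auto
  then have "card J0 \<le> r (f ` J0)" using assms(3) by (metis order_refl)
  moreover have "r (f ` J0) \<le> card (f ` J0)" using rank_le_card assms(1) by simp
  moreover have "card (f ` J0) \<le> card J0" by (rule card_image_le[OF assms(1)])
  ultimately have "r (f ` J0) = card J0" "card (f ` J0) = card J0" by linarith+
  then show ?thesis using eq_card_imp_inj_on[OF assms(1)] single by blast
qed

text \<open>Rado's theorem: the Hall condition \<open>card J \<le> r (\<Union>(A ` J))\<close> for all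
  \<open>J \<subseteq> J0\<close> implies an independent transversal; proved by shrinking the sets.\<close>
theorem rado:
  assumes "finite J0" "\<forall>j\<in>J0. finite (A j)" "\<forall>J\<subseteq>J0. card J \<le> r (\<Union>(A ` J))"
  shows "\<exists>f. (\<forall>j\<in>J0. f j \<in> A j) \<and> inj_on f J0 \<and> r (f ` J0) = card J0"
  using assms(2,3)
proof (induction "\<Sum>j\<in>J0. card (A j)" arbitrary: A rule: less_induct)
  case less
  show ?case
  proof (cases "\<forall>j\<in>J0. card (A j) \<le> 1")
    case True
    then show ?thesis using rado_singletons[OF assms(1) less.prems] by blast
  next
    case False
    then obtain j0 where j0: "j0 \<in> J0" "2 \<le> card (A j0)" by (auto simp: not_le)
    then obtain x where x: "x \<in> A j0"
      and hall': "\<forall>J\<subseteq>J0. card J \<le> r (\<Union>((A(j0 := A j0 - {x})) ` J))"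
      using rado_shrink[OF assms(1) less.prems] by blast
    define A' where "A' = A(j0 := A j0 - {x})"
    have "(\<Sum>j\<in>J0. card (A' j)) < (\<Sum>j\<in>J0. card (A j))"
    proof (rule sum_strict_mono_ex1[OF assms(1)])
      show "\<forall>j\<in>J0. card (A' j) \<le> card (A j)"
        using less.prems(1) by (auto simp: A'_def card_Diff1_le)
      show "\<exists>j\<in>J0. card (A' j) < card (A j)"
        using j0 x less.prems(1) by (auto simp: A'_def card_Diff1_less)
    qed
    moreover have "\<forall>j\<in>J0. finite (A' j)" using less.prems(1) by (simp add: A'_def)
    ultimately obtain f where "\<forall>j\<in>J0. f j \<in> A' j" "inj_on f J0" "r (f ` J0) = card J0"
      using less.hyps[of A'] hall' unfolding A'_def by blast
    moreover have "A' j \<subseteq> A j" for j by (simp add: A'_def)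
    ultimately show ?thesis by blast
  qed
qed

lemma hall_blocks_necessary:
  assumes fP: "finite P" and fE: "\<forall>p\<in>P. finite (E p)"
    and disj: "\<forall>p\<in>P. \<forall>q\<in>P. p \<noteq> q \<longrightarrow> E p \<inter> E q = {}"
    and X: "X \<subseteq> \<Union>(E ` P)" "\<forall>p\<in>P. card (X \<inter> E p) = c p" "r X = card X"
    and Q: "Q \<subseteq> P"
  shows "sum c Q \<le> r (\<Union>(E ` Q))"
proof -
  have fX: "finite X" using X(1) fP fE finite_subset by blast
  have fQ: "finite Q" using Q fP finite_subset by blast
  have "X \<inter> \<Union>(E ` Q) = (\<Union>p\<in>Q. X \<inter> E p)" by blast
  then have "card (X \<inter> \<Union>(E ` Q)) = (\<Sum>p\<in>Q. card (X \<inter> E p))"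
    using fQ fX Q disj by (simp only:) (intro card_UN_disjoint; blast)
  also have "\<dots> = sum c Q" using X(2) Q by (intro sum.cong) auto
  finally have "sum c Q = r (X \<inter> \<Union>(E ` Q))"
    using independent_subset[OF fX X(3), of "X \<inter> \<Union>(E ` Q)"] by simp
  also have "\<dots> \<le> r (\<Union>(E ` Q))" using fQ fE Q by (intro rank_mono) auto
  finally show ?thesis .
qed

text \<open>Sufficiency: apply \<open>rado\<close> to \<open>c p\<close> copies \<open>(p, k)\<close>, \<open>k < c p\<close>, of every block \<open>E p\<close>;
  the Hall condition for the copies is the capacity condition for the blocks.\<close>
lemma hall_blocks_sufficient:
  assumes fP: "finite P" and fE: "\<forall>p\<in>P. finite (E p)"
    and disj: "\<forall>p\<in>P. \<forall>q\<in>P. p \<noteq> q \<longrightarrow> E p \<inter> E q = {}"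
    and hall: "\<forall>Q\<subseteq>P. sum c Q \<le> r (\<Union>(E ` Q))"
  shows "\<exists>X. X \<subseteq> \<Union>(E ` P) \<and> (\<forall>p\<in>P. card (X \<inter> E p) = c p) \<and> r X = card X"
proof -
  define J0 where "J0 = Sigma P (\<lambda>p. {..<c p})"
  have hall_copies: "\<forall>J\<subseteq>J0. card J \<le> r (\<Union>((E \<circ> fst) ` J))"
  proof (intro allI impI)
    fix J assume J: "J \<subseteq> J0"
    have QP: "fst ` J \<subseteq> P" using J by (auto simp: J0_def)
    then have fQ: "finite (fst ` J)" using fP finite_subset by blast
    have "J \<subseteq> Sigma (fst ` J) (\<lambda>p. {..<c p})" using J by (force simp: J0_def)
    then have "card J \<le> card (Sigma (fst ` J) (\<lambda>p. {..<c p}))" using fQ by (intro card_mono) auto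
    also have "\<dots> = sum c (fst ` J)" using fQ by (simp add: card_SigmaI)
    also have "\<dots> \<le> r (\<Union>(E ` fst ` J))" using hall QP by blast
    finally show "card J \<le> r (\<Union>((E \<circ> fst) ` J))" by (simp add: image_comp)
  qed
  obtain f where f: "\<forall>j\<in>J0. f j \<in> E (fst j)" "inj_on f J0" "r (f ` J0) = card J0"
    using rado[of J0 "E \<circ> fst"] hall_copies fP fE by (auto simp: J0_def)
  have "card (f ` J0 \<inter> E p) = c p" if p: "p \<in> P" for p
  proof -
    have "q = p" if "(q, k) \<in> J0" "f (q, k) \<in> E p" for q k
    proof -
      have "f (q, k) \<in> E q" "q \<in> P" using f(1) that(1) by (auto simp: J0_def)
      then show "q = p" using disj p that(2) by blast
    qed
    then have "f ` J0 \<inter> E p = f ` ({p} \<times> {..<c p})"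
      using f(1) p by (auto simp: J0_def)
    also have "card \<dots> = c p"
      using p by (subst card_image[OF inj_on_subset[OF f(2)]]) (auto simp: J0_def)
    finally show ?thesis .
  qed
  moreover have "f ` J0 \<subseteq> \<Union>(E ` P)" using f(1) by (force simp: J0_def)
  moreover have "r (f ` J0) = card (f ` J0)" using f(2,3) by (simp add: card_image)
  ultimately show ?thesis by blast
qed

theorem rado_blocks:
  assumes "finite P" "\<forall>p\<in>P. finite (E p)" "\<forall>p\<in>P. \<forall>q\<in>P. p \<noteq> q \<longrightarrow> E p \<inter> E q = {}"
  shows "(\<exists>X. X \<subseteq> \<Union>(E ` P) \<and> (\<forall>p\<in>P. card (X \<inter> E p) = c p) \<and> r X = card X)
     \<longleftrightarrow> (\<forall>Q\<subseteq>P. sum c Q \<le> r (\<Union>(E ` Q)))"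
  using hall_blocks_necessary[OF assms] hall_blocks_sufficient[OF assms] by blast

end

lemma rank_function_dim: "rank_function (\<lambda>X. vs.dim ((v :: 'e \<Rightarrow> 'c \<Rightarrow> 'a::field) ` X))"
proof
  fix X :: "'e set" assume "finite X"
  then show "vs.dim (v ` X) \<le> card X"
    using vs.dim_le_card'[of "v ` X"] card_image_le[of X v] by simp
next
  fix X Y :: "'e set" assume "X \<subseteq> Y" "finite Y"
  then show "vs.dim (v ` X) \<le> vs.dim (v ` Y)"
    by (intro vs.dim_subset_finite) auto
next
  fix X Y :: "'e set" assume fin: "finite X" "finite Y"
  have "vs.dim (v ` (X \<inter> Y)) \<le> vs.dim (v ` X \<inter> v ` Y)"
    using fin by (intro vs.dim_subset_finite) auto
  moreover have "vs.dim (v ` X \<union> v ` Y) + vs.dim (v ` X \<inter> v ` Y) \<le> vs.dim (v ` X) + vs.dim (v ` Y)"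
    using fin by (intro vs.dim_Un_Int_le) auto
  ultimately show "vs.dim (v ` (X \<union> Y)) + vs.dim (v ` (X \<inter> Y)) \<le> vs.dim (v ` X) + vs.dim (v ` Y)"
    by (simp add: image_Un)
qed

definition restricted_row :: "('r \<Rightarrow> 'c \<Rightarrow> 'a::field) \<Rightarrow> 'c set \<Rightarrow> 'r \<Rightarrow> 'c \<Rightarrow> 'a" where
  "restricted_row G t i = (\<lambda>j. if j \<in> t then G i j else 0)"

definition unit_vec :: "'c \<Rightarrow> 'c \<Rightarrow> 'a::field" where
  "unit_vec j = (\<lambda>k. if k = j then 1 else 0)"

lemma submatrix_rank_restricted_row: "submatrix_rank G s t = vs.dim (restricted_row G t ` s)"
  unfolding submatrix_rank_def restricted_row_def by simp

lemma sum_fun_apply: "finite A \<Longrightarrow> (\<Sum>j\<in>A. f j) k = (\<Sum>j\<in>A. f j k)"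
  by (induction A rule: finite_induct) auto

lemma restricted_row_in_span_units:
  assumes "finite T'"
  shows "restricted_row G T' i \<in> vs.span (unit_vec ` T')"
proof -
  have "restricted_row G T' i = (\<Sum>j\<in>T'. scale_fun (G i j) (unit_vec j))"
    using assms by (simp add: fun_eq_iff sum_fun_apply scale_fun_def unit_vec_def
        restricted_row_def if_distrib[of "(*) _"] cong: if_cong)
  also have "\<dots> \<in> vs.span (unit_vec ` T')"
    by (intro vs.span_sum vs.span_scale vs.span_base) auto
  finally show ?thesis .
qed

lemma independent_Un_units:
  assumes "vs.independent B" "\<forall>f\<in>B. \<forall>j\<in>U. f j = 0" "finite U"
  shows "vs.independent (B \<union> unit_vec ` U)"
  using assms(3,2)
proof (induction U rule: finite_induct)
  case (insert x U)
  have "vs.subspace {f. f x = 0}" by (auto simp: vs.subspace_def scale_fun_def)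
  moreover have "B \<union> unit_vec ` U \<subseteq> {f. f x = 0}"
    using insert by (auto simp: unit_vec_def)
  ultimately have "vs.span (B \<union> unit_vec ` U) \<subseteq> {f. f x = 0}" by (rule vs.span_minimal[rotated])
  then have "unit_vec x \<notin> vs.span (B \<union> unit_vec ` U)" by (auto simp: unit_vec_def)
  then show ?case using insert vs.independent_insertI by fastforce
qed (use assms(1) in simp)

lemma card_units: "card (unit_vec ` U :: ('c \<Rightarrow> 'a::field) set) = card U"
proof (rule card_image, rule inj_onI)
  fix x y assume "(unit_vec x :: 'c \<Rightarrow> 'a) = unit_vec y"
  then have "(unit_vec x :: 'c \<Rightarrow> 'a) x = unit_vec y x" by simp
  then show "x = y" by (simp add: unit_vec_def split: if_splits)
qed

lemma dim_rows_units:
  fixes G :: "'r \<Rightarrow> 'c \<Rightarrow> 'a::field"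
  assumes "finite T'" "T' \<subseteq> T" "finite R"
  shows "vs.dim (restricted_row G T ` R \<union> unit_vec ` T') = submatrix_rank G R (T - T') + card T'"
proof -
  define C where "C = restricted_row G (T - T') ` R"
  have "restricted_row G T i - restricted_row G (T - T') i = restricted_row G T' i" for i
    using assms(2) by (auto simp: restricted_row_def fun_eq_iff)
  then have "vs.span (restricted_row G T ` R \<union> unit_vec ` T') = vs.span (C \<union> unit_vec ` T')"
    unfolding C_def using restricted_row_in_span_units[OF assms(1)] by (intro vs.span_Un_perturb) simp
  then have dim_eq: "vs.dim (restricted_row G T ` R \<union> unit_vec ` T') = vs.dim (C \<union> unit_vec ` T')"
    by (rule vs.span_eq_dim)
  obtain B where B: "B \<subseteq> C" "vs.independent B" "C \<subseteq> vs.span B" "card B = vs.dim C"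
    by (rule vs.basis_exists)
  have vanish: "\<forall>f\<in>B. \<forall>j\<in>T'. f j = 0" using B(1) by (auto simp: C_def restricted_row_def)
  have "vs.span (B \<union> unit_vec ` T') = vs.span (C \<union> unit_vec ` T')"
    using B(1,3) vs.span_mono[of B "B \<union> unit_vec ` T'"]
    by (subst vs.span_eq) (auto intro: vs.span_base)
  then have "vs.dim (C \<union> unit_vec ` T') = card (B \<union> unit_vec ` T')"
    using vs.dim_eq_card[OF _ independent_Un_units[OF B(2) vanish assms(1)]] by simp
  also have "\<dots> = card B + card T'"
  proof -
    have "finite B" using B(1) assms(3) finite_subset unfolding C_def by blast
    moreover have "(unit_vec j :: 'c \<Rightarrow> 'a) j \<noteq> 0" for j by (simp add: unit_vec_def)
    then have "B \<inter> unit_vec ` T' = {}" using vanish by blast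
    ultimately show ?thesis using assms(1) card_units by (simp add: card_Un_disjoint)
  qed
  finally show ?thesis using dim_eq B(4) by (simp add: submatrix_rank_restricted_row C_def)
qed

lemma choose_within_blocks_iff:
  assumes disj: "\<forall>i\<in>I. \<forall>i'\<in>I. i \<noteq> i' \<longrightarrow> A i \<inter> A i' = {}"
  shows "(\<exists>ss. (\<forall>i\<in>I. ss i \<subseteq> A i \<and> card (ss i) = k i) \<and> P (\<Union>i\<in>I. ss i))
     \<longleftrightarrow> (\<exists>X. X \<subseteq> (\<Union>i\<in>I. A i) \<and> (\<forall>i\<in>I. card (X \<inter> A i) = k i) \<and> P X)"
proof
  assume "\<exists>ss. (\<forall>i\<in>I. ss i \<subseteq> A i \<and> card (ss i) = k i) \<and> P (\<Union>i\<in>I. ss i)"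
  then obtain ss where ss: "\<forall>i\<in>I. ss i \<subseteq> A i \<and> card (ss i) = k i" "P (\<Union>i\<in>I. ss i)"
    by blast
  have "(\<Union>i'\<in>I. ss i') \<inter> A i = ss i" if i: "i \<in> I" for i
  proof (intro equalityI subsetI)
    fix x assume "x \<in> (\<Union>i'\<in>I. ss i') \<inter> A i"
    then obtain i' where "i' \<in> I" "x \<in> ss i'" "x \<in> A i" by blast
    moreover have "i' = i" using calculation ss(1) disj i by blast
    ultimately show "x \<in> ss i" by simp
  qed (use ss(1) i in blast)
  then show "\<exists>X. X \<subseteq> (\<Union>i\<in>I. A i) \<and> (\<forall>i\<in>I. card (X \<inter> A i) = k i) \<and> P X"
    using ss by (intro exI[of _ "\<Union>i\<in>I. ss i"]) auto
next
  assume "\<exists>X. X \<subseteq> (\<Union>i\<in>I. A i) \<and> (\<forall>i\<in>I. card (X \<inter> A i) = k i) \<and> P X"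
  then obtain X where "X \<subseteq> (\<Union>i\<in>I. A i)" "\<forall>i\<in>I. card (X \<inter> A i) = k i" "P X" by blast
  moreover have "X = (\<Union>i\<in>I. X \<inter> A i)" using \<open>X \<subseteq> (\<Union>i\<in>I. A i)\<close> by blast
  ultimately show "\<exists>ss. (\<forall>i\<in>I. ss i \<subseteq> A i \<and> card (ss i) = k i) \<and> P (\<Union>i\<in>I. ss i)"
    by (intro exI[of _ "\<lambda>i. X \<inter> A i"]) auto
qed

lemma card_within_blocks:
  assumes "finite I" "\<forall>i\<in>I. finite (A i)" "\<forall>i\<in>I. \<forall>i'\<in>I. i \<noteq> i' \<longrightarrow> A i \<inter> A i' = {}"
    and "X \<subseteq> (\<Union>i\<in>I. A i)"
  shows "card X = (\<Sum>i\<in>I. card (X \<inter> A i))"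
proof -
  have "X = (\<Union>i\<in>I. X \<inter> A i)" using assms(4) by blast
  also have "card \<dots> = (\<Sum>i\<in>I. card (X \<inter> A i))"
    using assms(1-3) by (intro card_UN_disjoint) auto
  finally show ?thesis .
qed

lemma card_complement_in_block:
  assumes "B \<subseteq> T" "finite B" "k \<le> card B"
  shows "card (C \<inter> B) = k \<longleftrightarrow> card ((T - C) \<inter> B) = card B - k"
proof -
  have "(T - C) \<inter> B = B - C \<inter> B" using assms(1) by blast
  moreover have "card (B - C \<inter> B) = card B - card (C \<inter> B)"
    using assms(2) by (intro card_Diff_subset) auto
  ultimately have "card ((T - C) \<inter> B) = card B - card (C \<inter> B)" by simp
  moreover have "card (C \<inter> B) \<le> card B" using assms(2) by (simp add: card_mono)
  ultimately show ?thesis using assms(3) by linarith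
qed

lemma Diff_UN_blocks:
  assumes "\<forall>j\<in>J. \<forall>j'\<in>J. j \<noteq> j' \<longrightarrow> A j \<inter> A j' = {}" "L \<subseteq> J"
  shows "(\<Union>j\<in>J. A j) - (\<Union>j\<in>L. A j) = (\<Union>j\<in>J - L. A j)"
proof (intro equalityI subsetI)
  fix x assume "x \<in> (\<Union>j\<in>J - L. A j)"
  then obtain j where "j \<in> J - L" "x \<in> A j" by blast
  moreover have "x \<notin> A l" if "l \<in> L" for l
  proof -
    have "j \<noteq> l" "l \<in> J" using \<open>j \<in> J - L\<close> assms(2) that by auto
    then have "A j \<inter> A l = {}" using assms(1) \<open>j \<in> J - L\<close> by blast
    then show ?thesis using \<open>x \<in> A j\<close> by blast
  qed
  ultimately show "x \<in> (\<Union>j\<in>J. A j) - (\<Union>j\<in>L. A j)" by blast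
qed blast

lemma Plus_vimage: "(Inl -` X) <+> (Inr -` X) = X"
proof (rule set_eqI)
  show "x \<in> (Inl -` X) <+> (Inr -` X) \<longleftrightarrow> x \<in> X" for x by (cases x) auto
qed

lemma Ball_Plus_iff: "(\<forall>p\<in>A <+> B. \<phi> p) \<longleftrightarrow> (\<forall>a\<in>A. \<phi> (Inl a)) \<and> (\<forall>b\<in>B. \<phi> (Inr b))"
  by auto

lemma all_subsets_Plus_iff: "(\<forall>Q\<subseteq>A <+> B. \<phi> Q) \<longleftrightarrow> (\<forall>I\<subseteq>A. \<forall>L\<subseteq>B. \<phi> (I <+> L))"
proof (intro iffI allI impI)
  fix I L assume "\<forall>Q\<subseteq>A <+> B. \<phi> Q" "I \<subseteq> A" "L \<subseteq> B"
  moreover have "I <+> L \<subseteq> A <+> B" using calculation(2,3) by auto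
  ultimately show "\<phi> (I <+> L)" by blast
next
  fix Q assume "\<forall>I\<subseteq>A. \<forall>L\<subseteq>B. \<phi> (I <+> L)" "Q \<subseteq> A <+> B"
  moreover have "Inl -` Q \<subseteq> A" "Inr -` Q \<subseteq> B" using \<open>Q \<subseteq> A <+> B\<close> by auto
  ultimately have "\<phi> ((Inl -` Q) <+> (Inr -` Q))" by blast
  then show "\<phi> Q" by (simp only: Plus_vimage)
qed

text \<open>The ground set of the augmented configuration is
  \<open>S <+> T\<close>; its blocks are the row blocks \<open>SS i\<close> (capacity \<open>s i\<close>) and the column blocks
  \<open>TT j\<close> (capacity \<open>card (TT j) - t j\<close>, the number of deleted columns).\<close>
locale partitioned_matrix =
  fixes G :: "'r \<Rightarrow> 'c \<Rightarrow> 'a::field"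
    and S :: "'r set" and T :: "'c set"
    and SS :: "nat \<Rightarrow> 'r set" and TT :: "nat \<Rightarrow> 'c set"
    and m n :: nat and s t :: "nat \<Rightarrow> nat"
  assumes finite_S: "finite S" and finite_T: "finite T"
    and S_eq: "S = (\<Union>i\<in>{1..m}. SS i)" and T_eq: "T = (\<Union>j\<in>{1..n}. TT j)"
    and disjoint_SS: "\<forall>i\<in>{1..m}. \<forall>i'\<in>{1..m}. i \<noteq> i' \<longrightarrow> SS i \<inter> SS i' = {}"
    and disjoint_TT: "\<forall>j\<in>{1..n}. \<forall>j'\<in>{1..n}. j \<noteq> j' \<longrightarrow> TT j \<inter> TT j' = {}"
    and t_le: "\<forall>j\<in>{1..n}. t j \<le> card (TT j)"
begin

definition aug_rank :: "('r + 'c) set \<Rightarrow> nat" where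
  "aug_rank X = vs.dim (case_sum (restricted_row G T) unit_vec ` X)"

definition block :: "nat + nat \<Rightarrow> ('r + 'c) set" where
  "block = case_sum (\<lambda>i. SS i <+> {}) (\<lambda>j. {} <+> TT j)"

definition capacity :: "nat + nat \<Rightarrow> nat" where
  "capacity = case_sum s (\<lambda>j. card (TT j) - t j)"

lemma SS_subset: "i \<in> {1..m} \<Longrightarrow> SS i \<subseteq> S"
  unfolding S_eq by blast

lemma finite_SS: "i \<in> {1..m} \<Longrightarrow> finite (SS i)"
  using SS_subset finite_S by (rule finite_subset)

lemma TT_subset: "j \<in> {1..n} \<Longrightarrow> TT j \<subseteq> T"
  unfolding T_eq by blast

lemma finite_TT: "j \<in> {1..n} \<Longrightarrow> finite (TT j)"
  using TT_subset finite_T by (rule finite_subset)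

lemma rank_function_aug_rank: "rank_function aug_rank"
  using rank_function_dim[of "case_sum (restricted_row G T) unit_vec"]
  by (simp add: aug_rank_def[abs_def])

lemma aug_rank_Plus:
  assumes "finite R" "C' \<subseteq> T"
  shows "aug_rank (R <+> C') = submatrix_rank G R (T - C') + card C'"
proof -
  have "case_sum (restricted_row G T) unit_vec ` (R <+> C') = restricted_row G T ` R \<union> unit_vec ` C'"
    by (auto simp: Plus_def image_Un image_image)
  then show ?thesis
    using dim_rows_units[OF finite_subset[OF assms(2) finite_T] assms(2,1)] by (simp add: aug_rank_def)
qed

lemma blocks_finite: "\<forall>p\<in>{1..m} <+> {1..n}. finite (block p)"
  using finite_SS finite_TT by (auto simp: block_def)

lemma blocks_disjoint:
  "\<forall>p\<in>{1..m} <+> {1..n}. \<forall>q\<in>{1..m} <+> {1..n}. p \<noteq> q \<longrightarrow> block p \<inter> block q = {}"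
proof (intro ballI impI)
  fix p q assume pq: "p \<in> {1..m} <+> {1..n}" "q \<in> {1..m} <+> {1..n}" "p \<noteq> q"
  show "block p \<inter> block q = {}"
  proof (cases p; cases q)
    fix i i' assume "p = Inl i" "q = Inl i'"
    then have "SS i \<inter> SS i' = {}" using pq disjoint_SS by blast
    then show ?thesis using \<open>p = Inl i\<close> \<open>q = Inl i'\<close> by (auto simp: block_def)
  next
    fix j j' assume "p = Inr j" "q = Inr j'"
    then have "TT j \<inter> TT j' = {}" using pq disjoint_TT by blast
    then show ?thesis using \<open>p = Inr j\<close> \<open>q = Inr j'\<close> by (auto simp: block_def)
  qed (auto simp: block_def)
qed

lemma Union_block: "\<Union>(block ` (I <+> L)) = (\<Union>i\<in>I. SS i) <+> (\<Union>j\<in>L. TT j)"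
  by (auto simp: block_def)

lemma card_Plus_Int_block:
  "card ((R <+> C) \<inter> block (Inl i)) = card (R \<inter> SS i)"
  "card ((R <+> C) \<inter> block (Inr j)) = card (C \<inter> TT j)"
proof -
  have "(R <+> C) \<inter> block (Inl i) = (R \<inter> SS i) <+> {}" "(R <+> C) \<inter> block (Inr j) = {} <+> (C \<inter> TT j)"
    by (auto simp: block_def)
  then show "card ((R <+> C) \<inter> block (Inl i)) = card (R \<inter> SS i)"
    "card ((R <+> C) \<inter> block (Inr j)) = card (C \<inter> TT j)"
    by (simp_all add: card_Plus_conv_if)
qed

lemma selection_iff_rows_cols:
  "(\<exists>ss tt. (\<forall>i\<in>{1..m}. ss i \<subseteq> SS i \<and> card (ss i) = s i)
        \<and> (\<forall>j\<in>{1..n}. tt j \<subseteq> TT j \<and> card (tt j) = t j)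
        \<and> submatrix_rank G (\<Union>i\<in>{1..m}. ss i) (\<Union>j\<in>{1..n}. tt j) = (\<Sum>i=1..m. s i))
   \<longleftrightarrow> (\<exists>R C. R \<subseteq> S \<and> (\<forall>i\<in>{1..m}. card (R \<inter> SS i) = s i)
        \<and> C \<subseteq> T \<and> (\<forall>j\<in>{1..n}. card (C \<inter> TT j) = t j)
        \<and> submatrix_rank G R C = (\<Sum>i=1..m. s i))"
  (is "?L \<longleftrightarrow> _")
proof -
  define \<sigma> where "\<sigma> = (\<Sum>i=1..m. s i)"
  define good_cols where "good_cols R \<longleftrightarrow>
    (\<exists>tt. (\<forall>j\<in>{1..n}. tt j \<subseteq> TT j \<and> card (tt j) = t j)
         \<and> submatrix_rank G R (\<Union>j\<in>{1..n}. tt j) = \<sigma>)" for R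
  have cols: "good_cols R \<longleftrightarrow>
      (\<exists>C. C \<subseteq> T \<and> (\<forall>j\<in>{1..n}. card (C \<inter> TT j) = t j) \<and> submatrix_rank G R C = \<sigma>)" for R
    using choose_within_blocks_iff[OF disjoint_TT, of t "\<lambda>C. submatrix_rank G R C = \<sigma>"]
    unfolding good_cols_def T_eq by simp
  have rows: "(\<exists>ss. (\<forall>i\<in>{1..m}. ss i \<subseteq> SS i \<and> card (ss i) = s i) \<and> good_cols (\<Union>i\<in>{1..m}. ss i))
      \<longleftrightarrow> (\<exists>R. R \<subseteq> S \<and> (\<forall>i\<in>{1..m}. card (R \<inter> SS i) = s i) \<and> good_cols R)"
    using choose_within_blocks_iff[OF disjoint_SS, of s good_cols] unfolding S_eq by simp
  have "?L \<longleftrightarrow> (\<exists>ss. (\<forall>i\<in>{1..m}. ss i \<subseteq> SS i \<and> card (ss i) = s i) \<and> good_cols (\<Union>i\<in>{1..m}. ss i))"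
    unfolding good_cols_def \<sigma>_def by (simp only: ex_simps)
  also have "\<dots> \<longleftrightarrow> (\<exists>R. R \<subseteq> S \<and> (\<forall>i\<in>{1..m}. card (R \<inter> SS i) = s i) \<and> good_cols R)"
    by (rule rows)
  finally show ?thesis unfolding cols \<sigma>_def by (simp only: ex_simps)
qed

lemma independent_selection_iff:
  assumes "R \<subseteq> S" "C' \<subseteq> T"
  shows "((\<forall>p\<in>{1..m} <+> {1..n}. card ((R <+> C') \<inter> block p) = capacity p)
            \<and> aug_rank (R <+> C') = card (R <+> C'))
     \<longleftrightarrow> ((\<forall>i\<in>{1..m}. card (R \<inter> SS i) = s i) \<and> (\<forall>j\<in>{1..n}. card ((T - C') \<inter> TT j) = t j)
            \<and> submatrix_rank G R (T - C') = (\<Sum>i=1..m. s i))"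
proof -
  have fin: "finite R" "finite C'" using assms finite_S finite_T finite_subset by blast+
  have cols: "card (C' \<inter> TT j) = card (TT j) - t j \<longleftrightarrow> card ((T - C') \<inter> TT j) = t j"
    if "j \<in> {1..n}" for j
    using card_complement_in_block[OF TT_subset[OF that] finite_TT[OF that], of "t j" "T - C'"]
      t_le that assms(2) by (simp add: double_diff)
  have counts: "(\<forall>p\<in>{1..m} <+> {1..n}. card ((R <+> C') \<inter> block p) = capacity p)
      \<longleftrightarrow> (\<forall>i\<in>{1..m}. card (R \<inter> SS i) = s i) \<and> (\<forall>j\<in>{1..n}. card ((T - C') \<inter> TT j) = t j)"
    using cols by (simp add: Ball_Plus_iff card_Plus_Int_block capacity_def)
  have "card R = (\<Sum>i=1..m. s i)" if "\<forall>i\<in>{1..m}. card (R \<inter> SS i) = s i"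
    using card_within_blocks[OF _ _ disjoint_SS, of R] finite_SS assms(1) that by (simp add: S_eq)
  moreover have "aug_rank (R <+> C') = card (R <+> C') \<longleftrightarrow> submatrix_rank G R (T - C') = card R"
    using aug_rank_Plus[OF fin(1) assms(2)] card_Plus[OF fin] by simp
  ultimately show ?thesis using counts by auto
qed

lemma selection_iff:
  "(\<exists>ss tt. (\<forall>i\<in>{1..m}. ss i \<subseteq> SS i \<and> card (ss i) = s i)
        \<and> (\<forall>j\<in>{1..n}. tt j \<subseteq> TT j \<and> card (tt j) = t j)
        \<and> submatrix_rank G (\<Union>i\<in>{1..m}. ss i) (\<Union>j\<in>{1..n}. tt j) = (\<Sum>i=1..m. s i))
   \<longleftrightarrow> (\<exists>X. X \<subseteq> \<Union>(block ` ({1..m} <+> {1..n}))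
        \<and> (\<forall>p\<in>{1..m} <+> {1..n}. card (X \<inter> block p) = capacity p) \<and> aug_rank X = card X)"
  (is "?L \<longleftrightarrow> (\<exists>X. ?selection X)")
proof -
  define good where "good R C' \<longleftrightarrow> R \<subseteq> S \<and> C' \<subseteq> T \<and> (\<forall>i\<in>{1..m}. card (R \<inter> SS i) = s i)
        \<and> (\<forall>j\<in>{1..n}. card ((T - C') \<inter> TT j) = t j) \<and> submatrix_rank G R (T - C') = (\<Sum>i=1..m. s i)"
    for R C'
  \<comment> \<open>Select the complement \<open>C' = T - C\<close> of the chosen columns instead of \<open>C\<close> itself.\<close>
  have "?L \<longleftrightarrow> (\<exists>R C'. good R C')"
  proof
    assume ?L
    then obtain R C where "R \<subseteq> S" "\<forall>i\<in>{1..m}. card (R \<inter> SS i) = s i" "C \<subseteq> T"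
      "\<forall>j\<in>{1..n}. card (C \<inter> TT j) = t j" "submatrix_rank G R C = (\<Sum>i=1..m. s i)"
      unfolding selection_iff_rows_cols by blast
    then have "good R (T - C)" by (simp add: good_def double_diff)
    then show "\<exists>R C'. good R C'" by blast
  next
    assume "\<exists>R C'. good R C'"
    then obtain R C' where "good R C'" by blast
    then show ?L unfolding selection_iff_rows_cols good_def by (intro exI[of _ R] exI[of _ "T - C'"]) auto
  qed
  also have "\<dots> \<longleftrightarrow> (\<exists>R C'. ?selection (R <+> C'))"
  proof -
    have "\<Union>(block ` ({1..m} <+> {1..n})) = S <+> T" by (simp add: Union_block S_eq T_eq)
    then have "R <+> C' \<subseteq> \<Union>(block ` ({1..m} <+> {1..n})) \<longleftrightarrow> R \<subseteq> S \<and> C' \<subseteq> T" for R C'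
      by auto
    then have "good R C' \<longleftrightarrow> ?selection (R <+> C')" for R C'
      using independent_selection_iff[of R C'] unfolding good_def by auto
    then show ?thesis by simp
  qed
  also have "\<dots> \<longleftrightarrow> (\<exists>X. ?selection X)"
  proof
    assume "\<exists>X. ?selection X"
    then obtain X where "?selection X" by blast
    then have "?selection ((Inl -` X) <+> (Inr -` X))" unfolding Plus_vimage .
    then show "\<exists>R C'. ?selection (R <+> C')" by blast
  qed blast
  finally show ?thesis .
qed

lemma hall_inequality_iff:
  assumes I: "I \<subseteq> {1..m}" and K: "K \<subseteq> {1..n}"
  shows "sum capacity (I <+> ({1..n} - K)) \<le> aug_rank (\<Union>(block ` (I <+> ({1..n} - K))))
     \<longleftrightarrow> int (submatrix_rank G (\<Union>i\<in>I. SS i) (\<Union>k\<in>K. TT k))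
          \<ge> int (\<Sum>i\<in>I. s i) + int (\<Sum>k\<in>K. t k) - int (\<Sum>j=1..n. t j)"
proof -
  define L where "L = {1..n} - K"
  have fin: "finite I" "finite L" using I finite_subset by (auto simp: L_def)
  have "(\<Union>i\<in>I. SS i) \<subseteq> S" "(\<Union>j\<in>L. TT j) \<subseteq> T"
    using I SS_subset TT_subset unfolding L_def by blast+
  then have fin_rows: "finite (\<Union>i\<in>I. SS i)" using finite_S finite_subset by blast
  have "T - (\<Union>j\<in>L. TT j) = (\<Union>k\<in>K. TT k)"
    using Diff_UN_blocks[OF disjoint_TT, of L] K by (simp add: T_eq L_def double_diff)
  moreover have "card (\<Union>j\<in>L. TT j) = (\<Sum>j\<in>L. card (TT j))"
    using fin(2) finite_TT disjoint_TT by (intro card_UN_disjoint) (auto simp: L_def)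
  ultimately have rank: "aug_rank (\<Union>(block ` (I <+> L)))
      = submatrix_rank G (\<Union>i\<in>I. SS i) (\<Union>k\<in>K. TT k) + (\<Sum>j\<in>L. card (TT j))"
    using aug_rank_Plus[OF fin_rows \<open>(\<Union>j\<in>L. TT j) \<subseteq> T\<close>] by (simp add: Union_block)
  have "int (sum capacity (I <+> L)) = int (\<Sum>i\<in>I. s i) + (\<Sum>j\<in>L. int (card (TT j) - t j))"
    using fin by (simp add: sum.Plus capacity_def)
  also have "(\<Sum>j\<in>L. int (card (TT j) - t j)) = (\<Sum>j\<in>L. int (card (TT j))) - (\<Sum>j\<in>L. int (t j))"
    using t_le by (simp add: L_def of_nat_diff sum_subtractf)
  finally have capacity: "int (sum capacity (I <+> L))
      = int (\<Sum>i\<in>I. s i) + int (\<Sum>j\<in>L. card (TT j)) - int (\<Sum>j\<in>L. t j)" by simp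
  have "int (\<Sum>j=1..n. t j) = int (\<Sum>j\<in>L. t j) + int (\<Sum>k\<in>K. t k)"
    using sum.subset_diff[OF K, of t] K by (simp add: L_def double_diff add.commute)
  then show ?thesis
    unfolding L_def[symmetric] of_nat_le_iff[symmetric, where 'a = int] rank capacity by linarith
qed

lemma hall_iff:
  "(\<forall>I\<subseteq>{1..m}. \<forall>K\<subseteq>{1..n}.
      int (submatrix_rank G (\<Union>i\<in>I. SS i) (\<Union>k\<in>K. TT k))
        \<ge> int (\<Sum>i\<in>I. s i) + int (\<Sum>k\<in>K. t k) - int (\<Sum>j=1..n. t j))
   \<longleftrightarrow> (\<forall>Q\<subseteq>{1..m} <+> {1..n}. sum capacity Q \<le> aug_rank (\<Union>(block ` Q)))"
  (is "?inequalities \<longleftrightarrow> ?hall")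
proof -
  define \<psi> where "\<psi> Q \<longleftrightarrow> sum capacity Q \<le> aug_rank (\<Union>(block ` Q))" for Q
  have "?hall \<longleftrightarrow> (\<forall>I\<subseteq>{1..m}. \<forall>L\<subseteq>{1..n}. \<psi> (I <+> L))"
    unfolding \<psi>_def by (rule all_subsets_Plus_iff)
  \<comment> \<open>Quantify over the complement \<open>K = {1..n} - L\<close> of the column blocks instead.\<close>
  also have "\<dots> \<longleftrightarrow> (\<forall>I\<subseteq>{1..m}. \<forall>K\<subseteq>{1..n}. \<psi> (I <+> ({1..n} - K)))"
  proof (intro iffI allI impI)
    fix I L assume all: "\<forall>I\<subseteq>{1..m}. \<forall>K\<subseteq>{1..n}. \<psi> (I <+> ({1..n} - K))"
      and I: "I \<subseteq> {1..m}" and L: "L \<subseteq> {1..n}"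
    have "\<psi> (I <+> ({1..n} - ({1..n} - L)))" using all I by blast
    then show "\<psi> (I <+> L)" using L by (simp add: double_diff)
  qed simp
  also have "\<dots> \<longleftrightarrow> ?inequalities"
    unfolding \<psi>_def using hall_inequality_iff by blast
  finally show ?thesis by (rule sym)
qed

end

theorem mainTheorem2:
  fixes G :: "'r \<Rightarrow> 'c \<Rightarrow> 'a::field"
    and S :: "'r set" and T :: "'c set"
    and SS :: "nat \<Rightarrow> 'r set" and TT :: "nat \<Rightarrow> 'c set"
    and m n :: nat and s t :: "nat \<Rightarrow> nat"
  assumes "finite S" and "finite T"
    and "S = (\<Union>i\<in>{1..m}. SS i)" and "T = (\<Union>j\<in>{1..n}. TT j)"
    and "\<forall>i\<in>{1..m}. \<forall>i'\<in>{1..m}. i \<noteq> i' \<longrightarrow> SS i \<inter> SS i' = {}"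
    and "\<forall>j\<in>{1..n}. \<forall>j'\<in>{1..n}. j \<noteq> j' \<longrightarrow> TT j \<inter> TT j' = {}"
    and "\<forall>j\<in>{1..n}. t j \<le> card (TT j)"
  shows "(\<exists>ss tt. (\<forall>i\<in>{1..m}. ss i \<subseteq> SS i \<and> card (ss i) = s i)
              \<and> (\<forall>j\<in>{1..n}. tt j \<subseteq> TT j \<and> card (tt j) = t j)
              \<and> submatrix_rank G (\<Union>i\<in>{1..m}. ss i) (\<Union>j\<in>{1..n}. tt j) = (\<Sum>i=1..m. s i))
         \<longleftrightarrow>
         (\<forall>I\<subseteq>{1..m}. \<forall>K\<subseteq>{1..n}.
            int (submatrix_rank G (\<Union>i\<in>I. SS i) (\<Union>k\<in>K. TT k))
              \<ge> int (\<Sum>i\<in>I. s i) + int (\<Sum>k\<in>K. t k) - int (\<Sum>j=1..n. t j))"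
proof -
  interpret partitioned_matrix G S T SS TT m n s t
    using assms by unfold_locales
  interpret rank_function aug_rank
    by (rule rank_function_aug_rank)
  have "finite ({1..m} <+> {1..n})" by simp
  then show ?thesis
    unfolding selection_iff hall_iff by (rule rado_blocks[OF _ blocks_finite blocks_disjoint])
qed

end
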